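(* Let $k\ge 1$, let $a\in\mathbb{C}$ with $a\neq 0$, let $a_1,\dots,a_k,a_1^*,\dots,a_k^*\in\mathbb{Q}$, and let $\zeta_1,\dots,\zeta_k,\zeta_1^*,\dots,\zeta_k^*$ be roots of unity such that $$\sum_{i=1}^k a_i\zeta_i=a,\qquad \sum_{j=1}^k a_j^*\zeta_j^*=a,$$ and such that $\sum_{i\in I}a_i\zeta_i\neq 0$ for every $I$ with $\emptyset\neq I\subsetneq[k]$ and $\sum_{j\in J}a_j^*\zeta_j^*\neq 0$ for every $J$ with $\emptyset\neq J\subsetneq[k]$. Let $m=\prod_{p\le 2k,\ p\text{ prime}}p$. Then for every $j\in[k]$ there is an $i\in[k]$ such that $(\zeta_j^*/\zeta_i)^m=1$.
   Context: $[k]=\{1,\dots,k\}$. *)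

theory Defs
  imports Complex_Main "HOL-Computational_Algebra.Primes"
begin

definition root_of_unity :: "complex \<Rightarrow> bool" where
  "root_of_unity z \<longleftrightarrow> (\<exists>n::nat. n > 0 \<and> z ^ n = 1)"

end

theory Submission
  imports Defs "Berlekamp_Zassenhaus.Factor_Bound" "HOL-Computational_Algebra.Squarefree"
begin

(* Gluing the two representations of a into one vanishing sum of 2k terms and passing to a
   minimal vanishing subsum through \<zeta>*_j, that subsum must also contain some \<zeta>_i, because neither
   representation has a vanishing proper subsum and a \<noteq> 0.  Mann's theorem then bounds the order
   of \<zeta>*_j/\<zeta>_i: in a minimal vanishing rational combination of n roots of unity normalised so
   that one of them is 1, all of them have squarefree order N with prime factors at most n.
   Writing the terms as powers of a primitive N-th root \<xi> and fixing a prime p dividing N, one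
   averages the sum over the Galois conjugates \<xi> \<mapsto> \<xi>^u with u \<equiv> 1 (mod N/p).  Conjugates of a
   vanishing sum vanish (irreducibility of cyclotomic polynomials, proved by the Frobenius
   argument), so exactly one such u is not a unit mod N, which rules out p\<^sup>2 dividing N; shifting
   the exponents then shows that all p residue classes mod p occur among them, so p \<le> n. *)

section \<open>Frobenius congruences\<close>

lemma prime_dvd_power_add_sub:
  fixes a b :: "'a :: comm_ring_1"
  assumes p: "prime p"
  shows "of_nat p dvd (a + b) ^ p - a ^ p - b ^ p"
proof -
  have p1: "p > 1" using p prime_gt_1_nat by blast
  have "{..p} = insert 0 (insert p {1..<p})" using p1 by auto
  hence "(a + b) ^ p = b ^ p + a ^ p + (\<Sum>k\<in>{1..<p}. of_nat (p choose k) * a ^ k * b ^ (p - k))"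
    using p1 by (simp add: binomial_ring)
  hence "(a + b) ^ p - a ^ p - b ^ p = (\<Sum>k\<in>{1..<p}. of_nat (p choose k) * a ^ k * b ^ (p - k))"
    by (simp add: algebra_simps)
  also have "of_nat p dvd \<dots>"
  proof (rule dvd_sum)
    fix k assume "k \<in> {1..<p}"
    hence "p dvd p choose k" using p by (intro dvd_choose_prime) auto
    hence "of_nat p dvd (of_nat (p choose k) :: 'a)" by (auto elim!: dvdE)
    thus "of_nat p dvd of_nat (p choose k) * a ^ k * b ^ (p - k)" by (intro dvd_mult2)
  qed
  finally show ?thesis .
qed

lemma prime_dvd_power_sub_self_int:
  fixes a :: int
  assumes p: "prime p"
  shows "int p dvd a ^ p - a"
proof (induction a rule: int_induct[where k = 0])
  case base
  show ?case using prime_gt_0_nat[OF p] by (simp add: zero_power)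
next
  case (step1 i)
  have "(i + 1) ^ p - (i + 1) = ((i + 1) ^ p - i ^ p - 1 ^ p) + (i ^ p - i)" by simp
  thus ?case using prime_dvd_power_add_sub[OF p, of i 1] step1.IH by (metis dvd_add of_nat_id)
next
  case (step2 i)
  have "(i - 1) ^ p - (i - 1) = (i ^ p - i) - ((i - 1 + 1) ^ p - (i - 1) ^ p - 1 ^ p)" by simp
  thus ?case using prime_dvd_power_add_sub[OF p, of "i - 1" 1] step2.IH by (metis dvd_diff)
qed

lemma prime_dvd_int_poly_power_sub_pcompose:
  fixes F :: "int poly"
  assumes p: "prime p"
  shows "of_nat p dvd F ^ p - F \<circ>\<^sub>p monom 1 p"
proof (induction F)
  case 0
  show ?case using prime_gt_0_nat[OF p] by (simp add: zero_power)
next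
  case (pCons a F)
  define X :: "int poly" where "X = [:0, 1:]"
  have X: "X ^ p = monom 1 p" by (simp add: X_def monom_altdef)
  have eq: "pCons a F ^ p - pCons a F \<circ>\<^sub>p monom 1 p =
      (([:a:] + X * F) ^ p - [:a:] ^ p - (X * F) ^ p)
      + ([:a:] ^ p - [:a:]) + X ^ p * (F ^ p - F \<circ>\<^sub>p monom 1 p)"
  proof -
    have "pCons a F = [:a:] + X * F" by (simp add: X_def)
    moreover have "pCons a F \<circ>\<^sub>p monom 1 p = [:a:] + X ^ p * (F \<circ>\<^sub>p monom 1 p)"
      by (simp add: pcompose_pCons X)
    ultimately show ?thesis by (simp add: power_mult_distrib algebra_simps)
  qed
  have "of_nat p dvd [:a:] ^ p - [:a:]"
    using prime_dvd_power_sub_self_int[OF p, of a]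
    by (auto elim!: dvdE simp: of_nat_poly poly_const_pow)
  thus ?case unfolding eq by (intro dvd_add prime_dvd_power_add_sub[OF p] dvd_mult pCons.IH)
qed

definition primitive_root_of_unity :: "nat \<Rightarrow> complex \<Rightarrow> bool" where
  "primitive_root_of_unity N \<xi> \<longleftrightarrow> N > 0 \<and> (\<forall>t. \<xi> ^ t = 1 \<longleftrightarrow> N dvd t)"

lemma primitive_root_of_unity_power_coprime:
  assumes "primitive_root_of_unity N \<xi>" "coprime u N"
  shows "primitive_root_of_unity N (\<xi> ^ u)"
proof -
  have "coprime N u" using assms(2) by (simp add: ac_simps)
  thus ?thesis using assms(1)
    by (simp add: primitive_root_of_unity_def power_mult[symmetric] coprime_dvd_mult_right_iff)
qed

lemma cis_primitive_root_of_unity: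
  assumes N: "N > 0"
  shows "primitive_root_of_unity N (cis (2 * pi / N))"
    and "z ^ N = 1 \<Longrightarrow> \<exists>k. z = cis (2 * pi / N) ^ k"
proof -
  let ?\<xi> = "cis (2 * pi / N)"
  have pow: "?\<xi> ^ k = cis (2 * pi * real k / real N)" for k
    by (simp add: DeMoivre mult.commute)
  have bij: "bij_betw (\<lambda>k. cis (2 * pi * real k / real N)) {..<N} {z. z ^ N = 1}"
    by (rule bij_betw_roots_unity[OF N])
  have "?\<xi> ^ t = 1 \<longleftrightarrow> N dvd t" for t
  proof -
    have "?\<xi> ^ t = (?\<xi> ^ N) ^ (t div N) * ?\<xi> ^ (t mod N)"
      by (simp add: power_mult[symmetric] power_add[symmetric])
    also have "\<dots> = ?\<xi> ^ (t mod N)" using N by (simp add: pow)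
    finally have "?\<xi> ^ t = cis (2 * pi * real (t mod N) / real N)" by (simp add: pow)
    moreover have inj: "inj_on (\<lambda>k. cis (2 * pi * real k / real N)) {..<N}"
      using bij by (simp add: bij_betw_def)
    ultimately show ?thesis using inj_on_eq_iff[OF inj, of "t mod N" 0] N
      by (simp add: dvd_eq_mod_eq_0)
  qed
  with N show "primitive_root_of_unity N ?\<xi>" by (simp add: primitive_root_of_unity_def)
  show "z ^ N = 1 \<Longrightarrow> \<exists>k. z = ?\<xi> ^ k"
    using bij by (auto simp: bij_betw_def pow)
qed

lemma root_of_unity_common_order:
  assumes "finite T" "\<forall>i\<in>T. root_of_unity (w i)"
  shows "\<exists>n>0. \<forall>i\<in>T. w i ^ n = 1"
  using assms
proof (induction T rule: finite_induct)
  case empty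
  show ?case by blast
next
  case (insert j T)
  then obtain n where n: "n > 0" "\<forall>i\<in>T. w i ^ n = 1" by auto
  obtain m where m: "m > 0" "w j ^ m = 1" using insert.prems by (auto simp: root_of_unity_def)
  have "\<forall>i\<in>insert j T. w i ^ (n * m) = 1"
    using n m by (auto simp: power_mult) (metis mult.commute power_mult power_one)
  with n m show ?case by (intro exI[of _ "n * m"]) simp
qed

section \<open>Galois conjugates of a primitive root of unity\<close>

interpretation of_rat_poly_hom: map_poly_idom_hom of_rat ..

lemma map_poly_of_rat_of_int_poly [simp]:
  "map_poly of_rat (of_int_poly p :: rat poly) = (of_int_poly p :: 'a :: field_char_0 poly)"
  by (simp add: map_poly_map_poly o_def)

lemma rat_minimal_polynomial_exists:
  fixes \<xi> :: complex and g :: "rat poly"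
  assumes "g \<noteq> 0" "poly (map_poly of_rat g) \<xi> = 0"
  obtains f where "lead_coeff f = 1" "poly (map_poly of_rat f) \<xi> = 0"
    "\<And>h. poly (map_poly of_rat h) \<xi> = 0 \<Longrightarrow> f dvd h"
proof -
  let ?vanishes = "\<lambda>f. f \<noteq> 0 \<and> poly (map_poly of_rat f) \<xi> = 0"
  obtain f0 where f0: "?vanishes f0" and least: "\<And>h. ?vanishes h \<Longrightarrow> degree f0 \<le> degree h"
    using ex_has_least_nat[of ?vanishes g degree] assms by blast
  define f where "f = smult (inverse (lead_coeff f0)) f0"
  have f: "lead_coeff f = 1" "poly (map_poly of_rat f) \<xi> = 0" "degree f = degree f0"
    using f0 by (simp_all add: f_def of_rat_hom.map_poly_hom_smult)
  hence "f \<noteq> 0" by auto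
  have "f dvd h" if h: "poly (map_poly of_rat h) \<xi> = 0" for h
  proof -
    have "(map_poly of_rat h :: complex poly) = map_poly of_rat (f * (h div f) + h mod f)"
      by (simp only: mult_div_mod_eq)
    also have "\<dots> = map_poly of_rat f * map_poly of_rat (h div f) + map_poly of_rat (h mod f)"
      by (simp only: of_rat_poly_hom.hom_add of_rat_poly_hom.hom_mult)
    finally have rem: "poly (map_poly of_rat (h mod f)) \<xi> = 0"
      using h f(2) by (metis poly_add poly_mult mult_zero_left add_0)
    show "f dvd h"
    proof (rule ccontr)
      assume "\<not> f dvd h"
      hence "h mod f \<noteq> 0" by (simp add: mod_eq_0_iff_dvd)
      hence "degree f0 \<le> degree (h mod f)" using rem by (intro least) simp
      moreover have "degree (h mod f) < degree f"
        using degree_mod_less[OF \<open>f \<noteq> 0\<close>, of h] \<open>h mod f \<noteq> 0\<close> by simp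
      ultimately show False using f(3) by simp
    qed
  qed
  with f that show thesis by blast
qed

lemma monic_rat_factor_of_monic_int_poly:
  fixes P :: "int poly" and f :: "rat poly"
  assumes P: "lead_coeff P = 1" and f: "lead_coeff f = 1" and dvd: "f dvd of_int_poly P"
  obtains F G where "of_int_poly F = f" "P = F * G" "lead_coeff F = 1"
proof -
  from dvd obtain g where g: "of_int_poly P = f * g" by (auto elim: dvdE)
  obtain r F where rF: "rat_to_normalized_int_poly f = (r, F)" by force
  from rat_to_int_factor_explicit[OF g rF] obtain G where PG: "P = F * smult (content P) G" by auto
  from rat_to_normalized_int_poly[OF rF] have fF: "f = smult r (of_int_poly F)" and r: "r > 0"
    by auto
  have "lead_coeff F * lead_coeff (smult (content P) G) = 1" using P PG by (metis lead_coeff_mult)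
  hence unit: "lead_coeff F dvd 1" by (metis dvd_triv_left)
  have rF1: "r * of_int (lead_coeff F) = 1" using f fF r by simp
  with r have "rat_of_int (lead_coeff F) = 1 / r" by (simp add: field_simps)
  with r have "lead_coeff F > 0" by (metis of_int_0_less_iff zero_less_divide_1_iff)
  with unit have lF: "lead_coeff F = 1" by (simp add: zdvd1_eq)
  with rF1 fF have "of_int_poly F = f" by simp
  with PG lF that show thesis by blast
qed

lemma root_of_unity_minimal_int_poly:
  fixes \<xi> :: complex
  assumes N: "N > 0" and \<xi>: "\<xi> ^ N = 1"
  obtains F G :: "int poly" where "lead_coeff F = 1" "F * G = monom 1 N - 1"
    "poly (of_int_poly F) \<xi> = 0" "\<And>h. poly (map_poly of_rat h) \<xi> = 0 \<Longrightarrow> of_int_poly F dvd h"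
proof -
  define P :: "int poly" where "P = monom 1 N - 1"
  have coeff_N: "coeff P N = 1" using N by (simp add: P_def)
  have "degree P \<le> N" unfolding P_def by (rule degree_diff_le) (auto simp: degree_monom_le)
  moreover have "N \<le> degree P" using coeff_N by (intro le_degree) simp
  ultimately have P: "lead_coeff P = 1" using coeff_N by simp
  have "poly (map_poly of_rat (of_int_poly P :: rat poly)) \<xi> = \<xi> ^ N - 1"
    by (simp add: P_def of_int_poly_hom.hom_minus of_rat_poly_hom.hom_minus map_poly_monom poly_monom)
  hence P_vanishes: "poly (map_poly of_rat (of_int_poly P :: rat poly)) \<xi> = 0" using \<xi> by simp
  moreover have "(of_int_poly P :: rat poly) \<noteq> 0" using P by auto
  ultimately obtain f where f: "lead_coeff f = 1" "poly (map_poly of_rat f) \<xi> = 0"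
    and f_dvd: "\<And>h. poly (map_poly of_rat h) \<xi> = 0 \<Longrightarrow> f dvd h"
    using rat_minimal_polynomial_exists by blast
  obtain F G where F: "of_int_poly F = f" "P = F * G" "lead_coeff F = 1"
    by (rule monic_rat_factor_of_monic_int_poly[OF P f(1) f_dvd[OF P_vanishes]])
  show thesis
  proof (rule that[of F G])
    show "poly (of_int_poly F) \<xi> = 0" using f(2) unfolding F(1)[symmetric] by simp
  qed (use F f_dvd P_def in simp_all)
qed

lemma rational_value_of_int_poly_in_Ints:
  fixes F Z :: "int poly" and \<xi> :: complex
  assumes F: "lead_coeff F = 1" "poly (of_int_poly F) \<xi> = 0"
    and F_dvd: "\<And>h. poly (map_poly of_rat h) \<xi> = 0 \<Longrightarrow> of_int_poly F dvd h"
    and Z: "poly (of_int_poly Z) \<xi> = of_rat r"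
  shows "r \<in> \<int>"
proof -
  obtain Q R where QR: "pseudo_divmod Z F = (Q, R)" by force
  have F0: "F \<noteq> 0" using F(1) by auto
  from pseudo_divmod[OF F0 QR] F(1) have Z_eq: "Z = F * Q + R" and R: "R = 0 \<or> degree R < degree F"
    by auto
  have "degree F \<noteq> 0"
  proof
    assume "degree F = 0"
    with F(1) have "F = 1" by (metis degree_0_id one_pCons)
    thus False using F(2) by simp
  qed
  with R have deg: "degree R < degree F" by auto
  define h :: "rat poly" where "h = of_int_poly R - [:r:]"
  have "poly (map_poly of_rat h) \<xi> = 0"
    using Z F(2) by (simp add: h_def Z_eq hom_distribs)
  hence "of_int_poly F dvd h" by (rule F_dvd)
  moreover have "degree h < degree (of_int_poly F :: rat poly)"
    using deg by (simp add: h_def degree_diff_less)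
  ultimately have "h = 0" by (metis dvd_imp_degree_le not_le)
  hence "of_int_poly R = [:r:]" by (simp add: h_def)
  hence "coeff (of_int_poly R) 0 = r" by simp
  hence "r = of_int (coeff R 0)" by simp
  thus ?thesis by simp
qed

lemma cofactor_pderiv_at_root_of_unity:
  fixes F G :: "'a :: field poly"
  assumes "N > 0" "F * G = monom 1 N - 1" "y ^ N = 1" "poly F y \<noteq> 0"
  shows "of_nat N = poly F y * poly (pderiv G) y * y"
proof -
  have "poly (F * G) y = 0" unfolding assms(2) using assms(3) by (simp add: poly_monom)
  hence G: "poly G y = 0" using assms(4) by simp
  have "poly (pderiv (F * G)) y = of_nat N * y ^ (N - 1)"
    unfolding assms(2) by (simp add: pderiv_diff pderiv_monom poly_monom)
  moreover have "poly (pderiv (F * G)) y = poly F y * poly (pderiv G) y"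
    using G by (simp add: pderiv_mult)
  ultimately have "poly F y * poly (pderiv G) y = of_nat N * y ^ (N - 1)" by simp
  hence "poly F y * poly (pderiv G) y * y = of_nat N * y ^ N"
    using assms(1) by (simp add: mult.assoc power_eq_if)
  thus ?thesis using assms(3) by simp
qed

(* With F the minimal polynomial of \<xi>, Frobenius gives F(\<xi>^q) \<equiv> F(\<xi>)^q = 0 modulo q.  If F(\<xi>^q)
   were nonzero, \<xi>^q would be a root of the cofactor G of F in X^N - 1, and differentiating
   F G = X^N - 1 at \<xi>^q would write N as q times an algebraic integer, so q would divide N. *)
lemma primitive_root_of_unity_rat_poly_root_power_prime:
  fixes h :: "rat poly"
  assumes \<xi>: "primitive_root_of_unity N \<xi>" and q: "prime q" "\<not> q dvd N"
    and h: "poly (map_poly of_rat h) \<xi> = 0"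
  shows "poly (map_poly of_rat h) (\<xi> ^ q) = 0"
proof -
  have N: "N > 0" and \<xi>N: "\<xi> ^ N = 1" using \<xi> by (auto simp: primitive_root_of_unity_def)
  obtain F G where F: "lead_coeff F = 1" and FG: "F * G = monom 1 N - 1"
    and F\<xi>: "poly (of_int_poly F) \<xi> = 0"
    and F_dvd: "\<And>h. poly (map_poly of_rat h) \<xi> = 0 \<Longrightarrow> of_int_poly F dvd h"
    using root_of_unity_minimal_int_poly[OF N \<xi>N] by blast
  define y where "y = \<xi> ^ q"
  have "poly (of_int_poly F) y = 0"
  proof (rule ccontr)
    assume Fy: "poly (of_int_poly F) y \<noteq> 0"
    obtain R where R: "F ^ q - F \<circ>\<^sub>p monom 1 q = of_nat q * R"
      using prime_dvd_int_poly_power_sub_pcompose[OF q(1)] unfolding dvd_def by blast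
    have "poly (of_int_poly (F ^ q - F \<circ>\<^sub>p monom 1 q)) \<xi> = poly (of_int_poly (of_nat q * R)) \<xi>"
      by (simp only: R)
    moreover have "poly (of_int_poly (F \<circ>\<^sub>p monom 1 q)) \<xi> = poly (of_int_poly F) y"
      by (simp add: of_int_hom.map_poly_pcompose poly_pcompose poly_monom y_def)
    moreover have "poly (of_int_poly (of_nat q * R)) \<xi> = of_nat q * poly (of_int_poly R) \<xi>"
      by (simp add: of_nat_poly of_int_hom.map_poly_hom_smult)
    ultimately have "poly (of_int_poly F) \<xi> ^ q - poly (of_int_poly F) y = of_nat q * poly (of_int_poly R) \<xi>"
      by (simp add: of_int_poly_hom.hom_power of_int_poly_hom.hom_minus)
    hence Fy_eq: "poly (of_int_poly F) y = - (of_nat q * poly (of_int_poly R) \<xi>)"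
      using F\<xi> prime_gt_0_nat[OF q(1)] by (simp add: zero_power) (metis minus_minus)
    have "of_int_poly F * of_int_poly G = (monom 1 N - 1 :: complex poly)"
      using arg_cong[OF FG, of "of_int_poly :: int poly \<Rightarrow> complex poly"] by (simp add: hom_distribs)
    moreover have "y ^ N = 1" unfolding y_def using \<xi>N by (metis power_mult mult.commute power_one)
    ultimately have "of_nat N = poly (of_int_poly F) y * poly (pderiv (of_int_poly G)) y * y"
      using cofactor_pderiv_at_root_of_unity N Fy by blast
    define Z where "Z = - (R * (pderiv G \<circ>\<^sub>p monom 1 q) * monom 1 q)"
    have "poly (of_int_poly Z) \<xi> = - (poly (of_int_poly R) \<xi> * poly (pderiv (of_int_poly G)) y * y)"
      by (simp add: Z_def of_int_poly_hom.hom_uminus of_int_poly_hom.hom_mult map_poly_monom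
          of_int_hom.map_poly_pcompose of_int_hom.map_poly_pderiv poly_pcompose poly_monom y_def)
    hence "of_nat N = of_nat q * poly (of_int_poly Z) \<xi>"
      unfolding \<open>of_nat N = _\<close> Fy_eq by simp
    hence "poly (of_int_poly Z) \<xi> = of_rat (of_nat N / of_nat q)"
      using q(1) prime_gt_0_nat by (simp add: of_rat_divide field_simps)
    hence "of_nat N / of_nat q \<in> (\<int> :: rat set)"
      using rational_value_of_int_poly_in_Ints[OF F F\<xi>] F_dvd by blast
    then obtain m where "of_nat N / of_nat q = (of_int m :: rat)" by (elim Ints_cases)
    hence "rat_of_int (int N) = rat_of_int (int q * m)" using q(1) prime_gt_0_nat
      by (simp add: field_simps)
    hence "int N = int q * m" by (simp only: of_int_eq_iff)
    hence "q dvd N" by (metis dvdI int_dvd_int_iff)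
    thus False using q(2) by simp
  qed
  moreover obtain h' where "h = of_int_poly F * h'" using F_dvd[OF h] by (auto elim: dvdE)
  ultimately show ?thesis by (simp add: of_rat_poly_hom.hom_mult y_def)
qed

lemma primitive_root_of_unity_rat_poly_root_power:
  fixes h :: "rat poly"
  assumes "primitive_root_of_unity N \<xi>" "coprime u N" "poly (map_poly of_rat h) \<xi> = 0"
  shows "poly (map_poly of_rat h) (\<xi> ^ u) = 0"
  using assms(2)
proof (induction u rule: prime_divisors_induct)
  case zero
  hence "N = 1" by simp
  hence "\<xi> = 1" using assms(1) by (simp add: primitive_root_of_unity_def) (metis power_one_right)
  thus ?case using assms(3) by simp
next
  case (unit u)
  thus ?case using assms(3) by simp
next
  case (factor q u)
  have "coprime q N" "coprime u N" using factor.prems by simp_all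
  have "\<not> q dvd N"
  proof
    assume "q dvd N"
    with \<open>coprime q N\<close> have "is_unit q" by (simp add: coprime_absorb_left)
    with factor.hyps(1) show False by (simp add: not_prime_unit)
  qed
  moreover have "primitive_root_of_unity N (\<xi> ^ u)"
    using assms(1) \<open>coprime u N\<close> by (rule primitive_root_of_unity_power_coprime)
  ultimately have "poly (map_poly of_rat h) ((\<xi> ^ u) ^ q) = 0"
    using primitive_root_of_unity_rat_poly_root_power_prime factor.hyps(1) factor.IH[OF \<open>coprime u N\<close>]
    by blast
  thus ?case by (simp add: power_mult[symmetric] mult.commute)
qed

lemma vanishing_rat_sum_conjugate:
  assumes \<xi>: "primitive_root_of_unity N \<xi>" and u: "coprime u N" and T: "finite T"
    and c: "\<forall>i\<in>T. c i \<in> \<rat>" and vanishing: "(\<Sum>i\<in>T. c i * \<xi> ^ e i) = 0"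
  shows "(\<Sum>i\<in>T. c i * \<xi> ^ (e i * u)) = 0"
proof -
  have "\<forall>i\<in>T. \<exists>x. c i = of_rat x" using c by (auto elim: Rats_cases)
  then obtain r where r: "\<And>i. i \<in> T \<Longrightarrow> c i = of_rat (r i)" by metis
  define h where "h = (\<Sum>i\<in>T. monom (r i) (e i))"
  have h: "poly (map_poly of_rat h) x = (\<Sum>i\<in>T. c i * x ^ e i)" for x
    unfolding h_def of_rat_poly_hom.hom_sum poly_sum
    by (rule sum.cong) (simp_all add: poly_monom r)
  have "poly (map_poly of_rat h) (\<xi> ^ u) = 0"
    by (rule primitive_root_of_unity_rat_poly_root_power[OF \<xi> u]) (simp add: h vanishing)
  thus ?thesis by (simp add: h power_mult[symmetric] mult.commute)
qed

section \<open>Mann's theorem on minimal vanishing sums of roots of unity\<close>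

lemma sum_power_shifts_divisible_part:
  assumes \<xi>: "primitive_root_of_unity N \<xi>" and p: "prime p" "p dvd N" and T: "finite T"
  shows "(\<Sum>v<p. \<Sum>i\<in>T. c i * \<xi> ^ (e i * (1 + N div p * v))) =
    of_nat p * (\<Sum>i\<in>{i\<in>T. p dvd e i}. c i * \<xi> ^ e i)"
proof -
  define M where "M = N div p"
  have N: "N = p * M" using p(2) by (simp add: M_def)
  have "M > 0" using N \<xi> by (auto simp: primitive_root_of_unity_def)
  have order: "\<xi> ^ n = 1 \<longleftrightarrow> N dvd n" for n using \<xi> by (simp add: primitive_root_of_unity_def)
  have geometric: "(\<Sum>v<p. (\<xi> ^ (M * e i)) ^ v) = (if p dvd e i then of_nat p else 0)" for i
  proof -
    have "\<xi> ^ (M * e i) = 1 \<longleftrightarrow> p dvd e i" using \<open>M > 0\<close> by (simp add: order N mult.commute)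
    moreover have "(\<xi> ^ (M * e i)) ^ p = 1" by (simp add: order N power_mult[symmetric])
    ultimately show ?thesis by (auto simp: sum_gp_strict)
  qed
  have "(\<Sum>v<p. \<Sum>i\<in>T. c i * \<xi> ^ (e i * (1 + M * v))) =
      (\<Sum>i\<in>T. c i * \<xi> ^ e i * (\<Sum>v<p. (\<xi> ^ (M * e i)) ^ v))"
    by (subst sum.swap)
      (simp add: sum_distrib_left distrib_left power_add power_mult[symmetric] mult_ac)
  also have "\<dots> = (\<Sum>i\<in>T. if p dvd e i then of_nat p * (c i * \<xi> ^ e i) else 0)"
    by (intro sum.cong refl) (simp add: geometric mult_ac)
  also have "\<dots> = (\<Sum>i\<in>{i\<in>T. p dvd e i}. of_nat p * (c i * \<xi> ^ e i))"
    by (simp only: sum.inter_filter[OF T])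
  also have "\<dots> = of_nat p * (\<Sum>i\<in>{i\<in>T. p dvd e i}. c i * \<xi> ^ e i)"
    by (simp add: sum_distrib_left)
  finally show ?thesis by (simp add: M_def)
qed

lemma vanishing_sum_divisible_part:
  assumes \<xi>: "primitive_root_of_unity N \<xi>" and p: "prime p" "p dvd N" and T: "finite T"
    and c: "\<forall>i\<in>T. c i \<in> \<rat>" and vanishing: "(\<Sum>i\<in>T. c i * \<xi> ^ e i) = 0"
  shows "of_nat p * (\<Sum>i\<in>{i\<in>T. p dvd e i}. c i * \<xi> ^ e i) =
    (\<Sum>v\<in>{v. v < p \<and> \<not> coprime (1 + N div p * v) N}. \<Sum>i\<in>T. c i * \<xi> ^ (e i * (1 + N div p * v)))"
proof -
  have conjugate: "(\<Sum>i\<in>T. c i * \<xi> ^ (e i * (1 + N div p * v))) = 0"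
    if "coprime (1 + N div p * v) N" for v
    using vanishing_rat_sum_conjugate[OF \<xi> that T c vanishing] .
  show ?thesis unfolding sum_power_shifts_divisible_part[OF \<xi> p T, symmetric]
  proof (rule sum.mono_neutral_right)
    show "\<forall>v\<in>{..<p} - {v. v < p \<and> \<not> coprime (1 + N div p * v) N}.
        (\<Sum>i\<in>T. c i * \<xi> ^ (e i * (1 + N div p * v))) = 0"
      using conjugate by blast
  qed auto
qed

lemma not_coprime_shift_imp_prime_dvd:
  fixes p M v :: nat
  assumes p: "prime p" and not_coprime: "\<not> coprime (1 + M * v) (p * M)"
  shows "p dvd 1 + M * v" "\<not> p dvd M"
proof -
  obtain r where r: "prime r" "r dvd 1 + M * v" "r dvd p * M"
    using not_coprime prime_factor_nat[of "gcd (1 + M * v) (p * M)"]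
    by (auto simp: coprime_iff_gcd_eq_1)
  have "\<not> r dvd M"
  proof
    assume "r dvd M"
    hence "r dvd 1" using r(2) dvd_add_left_iff[OF dvd_mult2[of r M v], of 1] by blast
    thus False using r(1) by simp
  qed
  hence "r dvd p" using r(1,3) by (simp add: prime_dvd_mult_iff)
  hence "r = p" using r(1) p by (simp add: primes_dvd_imp_eq)
  thus "p dvd 1 + M * v" "\<not> p dvd M" using r(2) \<open>\<not> r dvd M\<close> by auto
qed

lemma prime_dvd_shift_unique:
  fixes p M v w :: nat
  assumes p: "prime p" "\<not> p dvd M" and "v < p" "w < p" "p dvd 1 + M * v" "p dvd 1 + M * w"
  shows "v = w"
proof -
  have ordered: "v = w" if "v \<le> w" "w < p" "p dvd 1 + M * v" "p dvd 1 + M * w" for v w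
  proof -
    have "p dvd (1 + M * w) - (1 + M * v)" using that by (intro dvd_diff_nat)
    also have "(1 + M * w) - (1 + M * v) = M * (w - v)" by (simp add: diff_mult_distrib2)
    finally have "p dvd w - v" using p by (simp add: prime_dvd_mult_iff)
    thus "v = w" using that(1,2) nat_dvd_not_less[of "w - v" p] by linarith
  qed
  show ?thesis using assms ordered[of v w] ordered[of w v] by (cases "v \<le> w") auto
qed

lemma dvd_add_diff_iff_mod_eq:
  fixes p N s t :: nat
  assumes "p dvd N" "s < p" "s \<le> N"
  shows "p dvd t + (N - s) \<longleftrightarrow> t mod p = s"
proof -
  have "p dvd t + (N - s) \<longleftrightarrow> int p dvd int (t + (N - s))" by (simp only: int_dvd_int_iff)
  also have "int (t + (N - s)) = (int t - int s) + int N" using assms(3) by simp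
  also have "int p dvd (int t - int s) + int N \<longleftrightarrow> int p dvd int t - int s"
    using assms(1) by (simp add: dvd_add_left_iff)
  also have "\<dots> \<longleftrightarrow> int t mod int p = int s mod int p" by (simp add: mod_eq_dvd_iff)
  also have "\<dots> \<longleftrightarrow> t mod p = s mod p" by (metis of_nat_eq_iff zmod_int)
  finally show ?thesis using assms(2) by simp
qed

(* A minimal vanishing sum of rational multiples of powers of a primitive N-th root of unity \<xi>,
   one term of which is a rational number, and whose exponents generate \<int>/N\<int>. *)
locale minimal_vanishing_power_sum =
  fixes \<xi> :: complex and N :: nat and T :: "'i set" and c :: "'i \<Rightarrow> complex" and t :: "'i \<Rightarrow> nat"
  assumes primitive: "primitive_root_of_unity N \<xi>"
    and finite: "finite T"
    and rational: "\<forall>i\<in>T. c i \<in> \<rat>"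
    and vanishing: "(\<Sum>i\<in>T. c i * \<xi> ^ t i) = 0"
    and minimal: "\<And>S. S \<noteq> {} \<Longrightarrow> S \<subset> T \<Longrightarrow> (\<Sum>i\<in>S. c i * \<xi> ^ t i) \<noteq> 0"
    and unit_term: "\<exists>j\<in>T. N dvd t j"
    and exponents_generate: "\<And>p. prime p \<Longrightarrow> p dvd N \<Longrightarrow> \<exists>i\<in>T. \<not> p dvd t i"
begin

lemma divisible_part_nonzero:
  assumes "prime p" "p dvd N"
  shows "(\<Sum>i\<in>{i\<in>T. p dvd t i}. c i * \<xi> ^ t i) \<noteq> 0"
proof -
  have "{i\<in>T. p dvd t i} \<noteq> {}" using unit_term assms(2) dvd_trans by blast
  moreover have "{i\<in>T. p dvd t i} \<subset> T" using exponents_generate[OF assms] by blast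
  ultimately show ?thesis by (rule minimal)
qed

lemma unique_noncoprime_shift:
  assumes p: "prime p" "p dvd N"
  obtains v0 where "{v. v < p \<and> \<not> coprime (1 + N div p * v) N} = {v0}" "\<not> p dvd N div p"
proof -
  let ?V = "{v. v < p \<and> \<not> coprime (1 + N div p * v) N}"
  have "(\<Sum>v\<in>?V. \<Sum>i\<in>T. c i * \<xi> ^ (t i * (1 + N div p * v))) \<noteq> 0"
    unfolding vanishing_sum_divisible_part[OF primitive p finite rational vanishing, symmetric]
    using divisible_part_nonzero[OF p] prime_gt_0_nat[OF p(1)] by simp
  hence "?V \<noteq> {}" by (metis sum.empty)
  then obtain v0 where v0: "v0 \<in> ?V" by blast
  have shift: "p dvd 1 + N div p * v \<and> \<not> p dvd N div p" if "v \<in> ?V" for v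
    using that not_coprime_shift_imp_prime_dvd[OF p(1), of "N div p" v]
    by (simp add: dvd_mult_div_cancel[OF p(2)])
  have "v = v0" if "v \<in> ?V" for v
    using that v0 shift[OF that] shift[OF v0] by (intro prime_dvd_shift_unique[OF p(1)]) auto
  hence "?V = {v0}" using v0 by blast
  thus thesis using that shift v0 by blast
qed

lemma residue_classes_nonempty:
  assumes p: "prime p" "p dvd N" and s: "s < p"
  shows "\<exists>i\<in>T. t i mod p = s"
proof (rule ccontr)
  assume none: "\<not> (\<exists>i\<in>T. t i mod p = s)"
  obtain v0 where V: "{v. v < p \<and> \<not> coprime (1 + N div p * v) N} = {v0}"
    using unique_noncoprime_shift[OF p] by blast
  define u0 where "u0 = 1 + N div p * v0"
  define \<gamma> where "\<gamma> = (\<Sum>i\<in>T. c i * \<xi> ^ (t i * u0))"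
  have N: "N > 0" and "\<xi> ^ N = 1" using primitive by (auto simp: primitive_root_of_unity_def)
  hence \<xi>: "\<xi> \<noteq> 0" by (metis zero_power zero_neq_one)
  have "s \<le> N" using s dvd_imp_le[OF p(2) N] by simp
  have divisible: "of_nat p * (\<Sum>i\<in>{i\<in>T. p dvd e i}. c i * \<xi> ^ e i) = (\<Sum>i\<in>T. c i * \<xi> ^ (e i * u0))"
    if "(\<Sum>i\<in>T. c i * \<xi> ^ e i) = 0" for e
    using vanishing_sum_divisible_part[OF primitive p finite rational that] unfolding V u0_def by simp
  \<comment> \<open>multiplying by \<xi>^(N - s) moves the residue class s mod p to the exponents divisible by p\<close>
  define e where "e i = t i + (N - s)" for i
  have "(\<Sum>i\<in>T. c i * \<xi> ^ e i) = \<xi> ^ (N - s) * (\<Sum>i\<in>T. c i * \<xi> ^ t i)"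
    unfolding sum_distrib_left by (intro sum.cong refl) (simp add: e_def power_add mult_ac)
  hence e_vanishing: "(\<Sum>i\<in>T. c i * \<xi> ^ e i) = 0" by (simp add: vanishing)
  have empty: "{i\<in>T. p dvd e i} = {}"
    using none dvd_add_diff_iff_mod_eq[OF p(2) s \<open>s \<le> N\<close>] by (auto simp: e_def)
  have "0 = (\<Sum>i\<in>T. c i * \<xi> ^ (e i * u0))" using divisible[OF e_vanishing] unfolding empty by simp
  also have "\<dots> = \<xi> ^ ((N - s) * u0) * \<gamma>"
    unfolding \<gamma>_def sum_distrib_left
    by (intro sum.cong refl) (simp add: e_def algebra_simps power_add)
  also have "\<gamma> = of_nat p * (\<Sum>i\<in>{i\<in>T. p dvd t i}. c i * \<xi> ^ t i)"
    unfolding \<gamma>_def using divisible[OF vanishing] by simp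
  finally show False
    using \<xi> divisible_part_nonzero[OF p] prime_gt_0_nat[OF p(1)] by simp
qed

lemma prime_divisor_bound:
  assumes p: "prime p" "p dvd N"
  shows "\<not> p\<^sup>2 dvd N" "p \<le> card T"
proof -
  have "\<not> p dvd N div p" using unique_noncoprime_shift[OF p] by blast
  thus "\<not> p\<^sup>2 dvd N" using prime_gt_0_nat[OF p(1)] by (auto simp: power2_eq_square elim!: dvdE)
  have "{..<p} \<subseteq> (\<lambda>i. t i mod p) ` T" using residue_classes_nonempty[OF p] by auto
  hence "card {..<p} \<le> card ((\<lambda>i. t i mod p) ` T)" using finite by (intro card_mono) auto
  also have "\<dots> \<le> card T" using finite by (rule card_image_le)
  finally show "p \<le> card T" by simp
qed

end

definition primorial :: "nat \<Rightarrow> nat" where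
  "primorial n = (\<Prod>p\<in>{p. prime p \<and> p \<le> n}. p)"

lemma finite_primes_le: "finite {p :: nat. prime p \<and> p \<le> n}"
  by (rule finite_subset[of _ "{..n}"]) auto

lemma primorial_dvd_mono: "m \<le> n \<Longrightarrow> primorial m dvd primorial n"
  unfolding primorial_def by (intro prod_dvd_prod_subset finite_primes_le) auto

lemma squarefree_dvd_primorial:
  fixes N n :: nat
  assumes sq: "squarefree N" and small: "\<And>p. prime p \<Longrightarrow> p dvd N \<Longrightarrow> p \<le> n"
  shows "N dvd primorial n"
proof -
  have N: "N \<noteq> 0" using sq by (metis not_squarefree_0)
  have "N = (\<Prod>p\<in>prime_factors N. p ^ multiplicity p N)" using prod_prime_factors[OF N] by simp
  also have "\<dots> = \<Prod>(prime_factors N)"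
    using sq squarefree_factorial_semiring'[OF N] by (intro prod.cong) auto
  also have "\<dots> dvd primorial n"
    unfolding primorial_def using small
    by (intro prod_dvd_prod_subset finite_primes_le) (auto simp: prime_factors_dvd)
  finally show ?thesis .
qed

lemma mann_vanishing_sum_normalized:
  fixes T :: "'i set" and c w :: "'i \<Rightarrow> complex"
  assumes T: "finite T" and j: "j \<in> T" "w j = 1"
    and cw: "\<forall>i\<in>T. c i \<in> \<rat> \<and> root_of_unity (w i)"
    and vanishing: "(\<Sum>i\<in>T. c i * w i) = 0"
    and minimal: "\<And>S. S \<noteq> {} \<Longrightarrow> S \<subset> T \<Longrightarrow> (\<Sum>i\<in>S. c i * w i) \<noteq> 0"
  shows "\<forall>i\<in>T. w i ^ primorial (card T) = 1"
proof -
  let ?common = "\<lambda>n. n > 0 \<and> (\<forall>i\<in>T. w i ^ n = 1)"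
  have "\<forall>i\<in>T. root_of_unity (w i)" using cw by blast
  then obtain N0 where "?common N0" using root_of_unity_common_order[OF T] by blast
  then obtain N where N: "?common N" and least: "\<And>n. ?common n \<Longrightarrow> N \<le> n"
    using ex_has_least_nat[of ?common N0 id] by auto
  define \<xi> where "\<xi> = cis (2 * pi / N)"
  have \<xi>: "primitive_root_of_unity N \<xi>"
    unfolding \<xi>_def using N by (intro cis_primitive_root_of_unity) simp
  have "\<forall>i\<in>T. \<exists>k. w i = \<xi> ^ k" using N cis_primitive_root_of_unity(2) by (auto simp: \<xi>_def)
  then obtain t where t: "\<And>i. i \<in> T \<Longrightarrow> w i = \<xi> ^ t i" by metis
  have sum_t: "(\<Sum>i\<in>S. c i * \<xi> ^ t i) = (\<Sum>i\<in>S. c i * w i)" if "S \<subseteq> T" for S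
    using that t by (intro sum.cong) auto
  interpret minimal_vanishing_power_sum \<xi> N T c t
  proof
    show "(\<Sum>i\<in>T. c i * \<xi> ^ t i) = 0" using sum_t vanishing by simp
    show "\<And>S. S \<noteq> {} \<Longrightarrow> S \<subset> T \<Longrightarrow> (\<Sum>i\<in>S. c i * \<xi> ^ t i) \<noteq> 0"
      using sum_t minimal by auto
    show "\<exists>j\<in>T. N dvd t j" using j t \<xi> by (metis primitive_root_of_unity_def)
    fix p assume p: "prime p" "p dvd N"
    show "\<exists>i\<in>T. \<not> p dvd t i"
    proof (rule ccontr)
      assume "\<not> ?thesis"
      hence "\<forall>i\<in>T. w i ^ (N div p) = 1"
        using t \<xi> p(2) by (auto simp: primitive_root_of_unity_def power_mult[symmetric] elim!: dvdE)
      moreover have "N div p > 0" "N div p < N"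
        using N p prime_gt_1_nat by (auto elim!: dvdE)
      ultimately show False using least[of "N div p"] by simp
    qed
  qed (use \<xi> T cw in auto)
  have "N \<noteq> 0" using N by simp
  have "squarefree N"
    unfolding squarefree_factorial_semiring[OF \<open>N \<noteq> 0\<close>]
  proof (intro allI impI notI)
    fix p :: nat assume "prime p" "p\<^sup>2 dvd N"
    moreover from this have "p dvd N" by (metis dvd_trans dvd_triv_left power2_eq_square)
    ultimately show False using prime_divisor_bound(1) by blast
  qed
  hence "N dvd primorial (card T)"
    using prime_divisor_bound(2) by (rule squarefree_dvd_primorial)
  thus ?thesis using N by (auto elim!: dvdE simp: power_mult)
qed

lemma root_of_unity_divide:
  assumes "root_of_unity x" "root_of_unity y"
  shows "root_of_unity (x / y)"
proof -
  obtain n m where "n > 0" "x ^ n = 1" "m > 0" "y ^ m = 1"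
    using assms by (auto simp: root_of_unity_def)
  moreover have "y ^ (n * m) = (y ^ m) ^ n" unfolding power_mult[symmetric] by (simp add: mult.commute)
  ultimately have "(x / y) ^ (n * m) = 1" by (simp add: power_divide power_mult)
  with \<open>n > 0\<close> \<open>m > 0\<close> show ?thesis unfolding root_of_unity_def by (intro exI[of _ "n * m"]) simp
qed

theorem mann_vanishing_sum:
  fixes T :: "'i set" and c w :: "'i \<Rightarrow> complex"
  assumes T: "finite T" "i \<in> T" "j \<in> T"
    and cw: "\<forall>i\<in>T. c i \<in> \<rat> \<and> root_of_unity (w i)"
    and vanishing: "(\<Sum>i\<in>T. c i * w i) = 0"
    and minimal: "\<And>S. S \<noteq> {} \<Longrightarrow> S \<subset> T \<Longrightarrow> (\<Sum>i\<in>S. c i * w i) \<noteq> 0"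
  shows "(w i / w j) ^ primorial (card T) = 1"
proof -
  obtain n where "n > 0" "w j ^ n = 1" using cw T(3) by (auto simp: root_of_unity_def)
  hence "w j \<noteq> 0" by (metis zero_power zero_neq_one)
  hence sums: "(\<Sum>x\<in>S. c x * w x / w j) = (\<Sum>x\<in>S. c x * w x) / w j" for S
    by (simp add: sum_divide_distrib)
  have "\<forall>x\<in>T. (w x / w j) ^ primorial (card T) = 1"
  proof (rule mann_vanishing_sum_normalized[OF T(1) T(3)])
    show "w j / w j = 1" using \<open>w j \<noteq> 0\<close> by simp
    show "\<forall>x\<in>T. c x \<in> \<rat> \<and> root_of_unity (w x / w j)"
      using cw T(3) root_of_unity_divide by blast
  qed (use vanishing minimal \<open>w j \<noteq> 0\<close> in \<open>simp_all add: sums\<close>)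
  thus ?thesis using T(2) by blast
qed

lemma minimal_vanishing_subsum_exists:
  fixes f :: "'i \<Rightarrow> 'a :: ab_group_add"
  assumes U: "finite U" "j \<in> U" "sum f U = 0"
  obtains T where "T \<subseteq> U" "j \<in> T" "sum f T = 0" "\<And>S. S \<noteq> {} \<Longrightarrow> S \<subset> T \<Longrightarrow> sum f S \<noteq> 0"
proof -
  let ?candidate = "\<lambda>T. T \<subseteq> U \<and> j \<in> T \<and> sum f T = 0"
  obtain T where T: "?candidate T" and least: "\<And>S. ?candidate S \<Longrightarrow> card T \<le> card S"
    using ex_has_least_nat[of ?candidate U card] U by blast
  have "finite T" using T U(1) finite_subset by blast
  have "sum f S \<noteq> 0" if S: "S \<noteq> {}" "S \<subset> T" for S
  proof
    assume S0: "sum f S = 0"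
    show False
    proof (cases "j \<in> S")
      case True
      hence "card T \<le> card S" using S S0 T by (intro least) auto
      thus False using psubset_card_mono[OF \<open>finite T\<close> S(2)] by simp
    next
      case False
      have "sum f (T - S) = 0" using S0 T sum_diff[OF \<open>finite T\<close>, of S f] S(2) by auto
      hence "card T \<le> card (T - S)" using T False by (intro least) auto
      moreover have "T - S \<subset> T" using S by blast
      hence "card (T - S) < card T" using \<open>finite T\<close> by (rule psubset_card_mono[rotated])
      ultimately show False by simp
    qed
  qed
  with T that show thesis by blast
qed

lemma vanishing_subsum_meets_Inl:
  fixes g :: "'a + 'b \<Rightarrow> 'c :: comm_monoid_add"
  assumes T: "T \<subseteq> Inl ` A \<union> Inr ` B" "T \<noteq> {}" "sum g T = 0"
    and right: "\<And>J. J \<noteq> {} \<Longrightarrow> J \<subseteq> B \<Longrightarrow> (\<Sum>j\<in>J. g (Inr j)) \<noteq> 0"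
  obtains i where "i \<in> A" "Inl i \<in> T"
proof -
  have "\<exists>i. Inl i \<in> T"
  proof (rule ccontr)
    assume no_Inl: "\<nexists>i. Inl i \<in> T"
    define J where "J = Inr -` T"
    have T_eq: "T = Inr ` J"
    proof
      show "T \<subseteq> Inr ` J"
      proof
        fix x assume "x \<in> T"
        with no_Inl show "x \<in> Inr ` J" by (cases x) (auto simp: J_def)
      qed
    qed (auto simp: J_def)
    have "sum g T = (\<Sum>j\<in>J. g (Inr j))" unfolding T_eq by (simp add: sum.reindex)
    moreover have "J \<noteq> {}" "J \<subseteq> B" using T(1,2) by (auto simp: T_eq)
    ultimately show False using right T(3) by simp
  qed
  with T(1) that show thesis by blast
qed

theorem theorem6:
  fixes k :: nat and a :: complex
    and c cs :: "nat \<Rightarrow> complex" and z zs :: "nat \<Rightarrow> complex"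
  assumes "k \<ge> 1" and "a \<noteq> 0"
    and "\<forall>i\<in>{1..k}. c i \<in> \<rat> \<and> cs i \<in> \<rat>"
    and "\<forall>i\<in>{1..k}. root_of_unity (z i) \<and> root_of_unity (zs i)"
    and "(\<Sum>i=1..k. c i * z i) = a"
    and "(\<Sum>j=1..k. cs j * zs j) = a"
    and "\<forall>I. I \<noteq> {} \<and> I \<subset> {1..k} \<longrightarrow> (\<Sum>i\<in>I. c i * z i) \<noteq> 0"
    and "\<forall>J. J \<noteq> {} \<and> J \<subset> {1..k} \<longrightarrow> (\<Sum>j\<in>J. cs j * zs j) \<noteq> 0"
  shows "\<forall>j\<in>{1..k}. \<exists>i\<in>{1..k}.
           (zs j / z i) ^ (\<Prod>p\<in>{p::nat. prime p \<and> p \<le> 2 * k}. p) = 1"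
proof (intro ballI)
  fix j assume j: "j \<in> {1..k}"
  let ?U = "Inl ` {1..k} \<union> Inr ` {1..k}"
  define C where "C = case_sum c (\<lambda>l. - cs l)"
  define W where "W = case_sum z zs"
  have CW: "\<forall>x\<in>?U. C x \<in> \<rat> \<and> root_of_unity (W x)" using assms(3,4) by (auto simp: C_def W_def)
  have right: "(\<Sum>l\<in>J. C (Inr l) * W (Inr l)) = - (\<Sum>l\<in>J. cs l * zs l)" for J
    by (simp add: C_def W_def sum_negf)
  have finite_U: "finite ?U" by simp
  have "Inr j \<in> ?U" using j by simp
  moreover have "(\<Sum>x\<in>?U. C x * W x) = 0"
    using assms(5,6) by (subst sum.union_disjoint) (auto simp: sum.reindex C_def W_def sum_negf)
  ultimately obtain T where T: "T \<subseteq> ?U" "Inr j \<in> T" "(\<Sum>x\<in>T. C x * W x) = 0"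
    and minimal: "\<And>S. S \<noteq> {} \<Longrightarrow> S \<subset> T \<Longrightarrow> (\<Sum>x\<in>S. C x * W x) \<noteq> 0"
    by (rule minimal_vanishing_subsum_exists[OF finite_U]) (rule that)
  have "(\<Sum>l\<in>J. C (Inr l) * W (Inr l)) \<noteq> 0" if "J \<noteq> {}" "J \<subseteq> {1..k}" for J
    using that assms(2,6,8) right[of J] by (cases "J = {1..k}") auto
  then obtain i where i: "i \<in> {1..k}" "Inl i \<in> T"
    using vanishing_subsum_meets_Inl[OF T(1) _ T(3)] T(2) by blast
  have "(W (Inl i) / W (Inr j)) ^ primorial (card T) = 1"
    using T CW minimal i by (intro mann_vanishing_sum) (auto intro: finite_subset)
  moreover have "primorial (card T) dvd primorial (2 * k)"
    using card_mono[OF _ T(1)] card_Un_le[of "Inl ` {1..k}" "Inr ` {1..k}"]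
    by (intro primorial_dvd_mono) (simp add: card_image)
  ultimately have "(z i / zs j) ^ primorial (2 * k) = 1" by (auto elim!: dvdE simp: power_mult W_def)
  hence "(zs j / z i) ^ primorial (2 * k) = 1" by (metis inverse_divide power_inverse inverse_1)
  with i show "\<exists>i\<in>{1..k}. (zs j / z i) ^ (\<Prod>p\<in>{p. prime p \<and> p \<le> 2 * k}. p) = 1"
    unfolding primorial_def by blast
qed

end
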